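(* Let $y=f(x)$ be an ROC curve and let $0\le a<b\le 1$. Suppose $(h,k)$ is an optimal point of this ROC curve for every $t\in[a,b]$, and let $c_t(h,k)=th+(1-t)(1-k)$ denote its normalized expected cost. Then the volume over the ROC surface on $[a,b]$ satisfies $$\mathrm{VOROS}(f,[a,b])=\frac{1}{b-a}\int_a^b\left(1-\frac{\big(c_t(h,k)\big)^2}{2t(1-t)}\right)dt.$$
   Context: ROC space is $[0,1]^2$, a point $(x,y)$ representing a binary classifier with false positive rate $x$ and true positive rate $y$. An ROC curve is the graph of a function $f:[0,1]\to[0,1]$ obtained by joining by line segments finitely many points of ROC space, including $(0,0)$ and $(1,1)$. For $t\in[0,1]$, the normalized expected cost of $(x,y)$ is $\mathrm{Cost}(x,y,t)=tx+(1-t)(1-y)$. The upper convex hull of the curve is the boundary of the convex hull of the points of its graph together with $(0,0)$, $(1,1)$, $(1,0)$. For $t\in[0,1]$, an optimal point of the ROC curve is a point $(h,k)$ of the upper convex hull having a supporting line of slope $\frac{t}{1-t}$ (vertical if $t=1$), i.e. the convex hull lies entirely in the closed half-plane bounded by the line through $(h,k)$ of that slope on the side of higher cost; equivalently $\mathrm{Cost}(h,k,t)\le\mathrm{Cost}(x,y,t)$ for all $(x,y)$ in that convex hull. The area of lesser classifiers $A_t(h,k)$ is the area of the set of $(h',k')\in[0,1]^2$ with $\mathrm{Cost}(h',k',t)>\mathrm{Cost}(h,k,t)$. The volume over the ROC surface on $[a,b]$ (with the standard Lebesgue measure on $t$) is $\mathrm{VOROS}(f,[a,b])=\frac{1}{b-a}\int_a^b\max_{x\in[0,1]}A_t(x,f(x))\,dt$.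 *)

theory Defs
  imports "HOL-Analysis.Analysis"
begin

definition roc_curve :: "(real \<Rightarrow> real) \<Rightarrow> bool" where
  "roc_curve f \<longleftrightarrow>
    (\<exists>ps :: (real \<times> real) list.
       length ps \<ge> 2 \<and>
       sorted_wrt (\<lambda>p q. fst p < fst q) ps \<and>
       hd ps = (0, 0) \<and> last ps = (1, 1) \<and>
       (\<forall>p \<in> set ps. p \<in> {0..1} \<times> {0..1}) \<and>
       (\<forall>i < length ps - 1. \<forall>x \<in> {fst (ps ! i) .. fst (ps ! Suc i)}.
          f x = snd (ps ! i) + (x - fst (ps ! i)) * (snd (ps ! Suc i) - snd (ps ! i))
                                / (fst (ps ! Suc i) - fst (ps ! i))))"

definition cost :: "real \<Rightarrow> real \<Rightarrow> real \<Rightarrow> real" where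
  "cost x y t = t * x + (1 - t) * (1 - y)"

definition roc_hull :: "(real \<Rightarrow> real) \<Rightarrow> (real \<times> real) set" where
  "roc_hull f = convex hull ({(x, f x) | x. x \<in> {0..1}} \<union> {(0, 0), (1, 1), (1, 0)})"

text \<open>(h,k) is an optimal point for t: it lies on the upper convex hull (boundary of the
  convex hull) and minimizes the cost over the convex hull.\<close>
definition optimal_point :: "(real \<Rightarrow> real) \<Rightarrow> real \<Rightarrow> real \<Rightarrow> real \<Rightarrow> bool" where
  "optimal_point f t h k \<longleftrightarrow>
     (h, k) \<in> frontier (roc_hull f) \<and>
     (\<forall>(x, y) \<in> roc_hull f. cost h k t \<le> cost x y t)"

definition area_lesser :: "real \<Rightarrow> real \<Rightarrow> real \<Rightarrow> real" where
  "area_lesser t h k =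
     measure lborel {p \<in> {0..1} \<times> {0..1}. cost (fst p) (snd p) t > cost h k t}"

text \<open>Volume over the ROC surface on [a,b] (max realised as Sup).\<close>
definition VOROS :: "(real \<Rightarrow> real) \<Rightarrow> real \<Rightarrow> real \<Rightarrow> real" where
  "VOROS f a b = 1 / (b - a) *
     (LINT t:{a..b}|lborel. (SUP x\<in>{0..1}. area_lesser t x (f x)))"

end

theory Submission
  imports Defs
begin

(* For 0 < t < 1 the area of lesser classifiers of a point depends only on its cost c and
   decreases in c: the region of cost above c is the unit square minus a right triangle with
   legs c/t and c/(1 - t), of area 1 - c^2/(2t(1 - t)) as long as 0 <= c <= min t (1 - t).
   Hence the maximum over the curve is attained where the cost is minimal. A linear
   functional on the convex hull of the (compact) graph and the corner (1,0) is minimised at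
   a graph point, so this minimal cost is the cost of the optimal point (h,k). The two
   integrands therefore agree on ]a,b[. *)

lemma exists_segment_containing:
  fixes xs :: "nat \<Rightarrow> real"
  assumes "0 < n" "xs 0 \<le> x" "x \<le> xs n"
  shows "\<exists>i<n. x \<in> {xs i..xs (Suc i)}"
  using assms
proof (induction n)
  case 0
  then show ?case by simp
next
  case (Suc n)
  show ?case
  proof (cases "xs n \<le> x")
    case True
    then show ?thesis using Suc.prems by auto
  next
    case False
    with Suc.prems have "0 < n" by (cases n) auto
    with Suc.IH Suc.prems False obtain i where "i < n" "x \<in> {xs i..xs (Suc i)}" by auto
    then show ?thesis by (intro exI[of _ i]) auto
  qed
qed

locale roc_interpolation =
  fixes ps :: "(real \<times> real) list" and f :: "real \<Rightarrow> real"
  assumes length_ge_2: "length ps \<ge> 2"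
    and knots_increasing: "\<And>i j. i < j \<Longrightarrow> j < length ps \<Longrightarrow> fst (ps ! i) < fst (ps ! j)"
    and first_knot: "ps ! 0 = (0, 0)"
    and last_knot: "ps ! (length ps - 1) = (1, 1)"
    and knots_in_box: "\<And>i. i < length ps \<Longrightarrow> ps ! i \<in> {0..1} \<times> {0..1}"
    and linear_on_segment: "\<And>i x. i < length ps - 1 \<Longrightarrow> x \<in> {fst (ps ! i)..fst (ps ! Suc i)} \<Longrightarrow>
           f x = snd (ps ! i) + (x - fst (ps ! i)) * (snd (ps ! Suc i) - snd (ps ! i))
                                 / (fst (ps ! Suc i) - fst (ps ! i))"
begin

lemma segment_increasing: "i < length ps - 1 \<Longrightarrow> fst (ps ! i) < fst (ps ! Suc i)"
  by (rule knots_increasing) auto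

lemma segment_in_unit_interval:
  assumes "i < length ps - 1" "x \<in> {fst (ps ! i)..fst (ps ! Suc i)}"
  shows "x \<in> {0..1}"
  using assms knots_in_box[of i] knots_in_box[of "Suc i"] by (auto simp: less_diff_conv)

lemma unit_interval_covered:
  assumes "x \<in> {0..1}"
  obtains i where "i < length ps - 1" "x \<in> {fst (ps ! i)..fst (ps ! Suc i)}"
  using exists_segment_containing[of "length ps - 1" "\<lambda>i. fst (ps ! i)" x]
    assms length_ge_2 first_knot last_knot that
  by auto

lemma endpoints: "f 0 = 0" "f 1 = 1"
proof -
  show "f 0 = 0"
    using linear_on_segment[of 0 0] segment_increasing[of 0] length_ge_2 first_knot by simp
  define m where "m = length ps - 2"
  have m: "m < length ps - 1" "Suc m = length ps - 1" using length_ge_2 by (auto simp: m_def)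
  then show "f 1 = 1"
    using linear_on_segment[of m 1] segment_increasing[of m] last_knot by simp
qed

lemma le_one:
  assumes "x \<in> {0..1}"
  shows "f x \<le> 1"
proof -
  obtain i where i: "i < length ps - 1" and x: "x \<in> {fst (ps ! i)..fst (ps ! Suc i)}"
    using unit_interval_covered[OF assms] .
  define u where "u = (x - fst (ps ! i)) / (fst (ps ! Suc i) - fst (ps ! i))"
  have "0 \<le> u" "u \<le> 1"
    using x segment_increasing[OF i] by (auto simp: u_def divide_simps)
  moreover have "snd (ps ! i) \<le> 1" "snd (ps ! Suc i) \<le> 1"
    using knots_in_box[of i] knots_in_box[of "Suc i"] i by (auto simp: less_diff_conv)
  moreover have "f x = snd (ps ! i) + u * (snd (ps ! Suc i) - snd (ps ! i))"
    using linear_on_segment[OF i x] by (simp add: u_def)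
  then have "f x = (1 - u) * snd (ps ! i) + u * snd (ps ! Suc i)" by (simp add: algebra_simps)
  ultimately show ?thesis
    using convex_bound_le[of "snd (ps ! i)" 1 "snd (ps ! Suc i)" "1 - u" u] by simp
qed

lemma continuous_on_unit_interval: "continuous_on {0..1} f"
proof -
  have "{0..1} = (\<Union>i<length ps - 1. {fst (ps ! i)..fst (ps ! Suc i)})"
  proof (intro equalityI subsetI)
    fix x :: real
    assume "x \<in> {0..1}"
    then obtain i where "i < length ps - 1" "x \<in> {fst (ps ! i)..fst (ps ! Suc i)}"
      by (rule unit_interval_covered)
    then show "x \<in> (\<Union>i<length ps - 1. {fst (ps ! i)..fst (ps ! Suc i)})" by blast
  qed (use segment_in_unit_interval in blast)
  moreover have "continuous_on (\<Union>i<length ps - 1. {fst (ps ! i)..fst (ps ! Suc i)}) f"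
  proof (rule continuous_on_closed_Union)
    fix i
    assume i: "i \<in> {..<length ps - 1}"
    then have "fst (ps ! Suc i) - fst (ps ! i) \<noteq> 0" using segment_increasing by fastforce
    then show "continuous_on {fst (ps ! i)..fst (ps ! Suc i)} f"
      using i by (intro continuous_on_eq[OF _ linear_on_segment[symmetric]] continuous_intros) auto
  qed auto
  ultimately show ?thesis by simp
qed

end

lemma roc_curve_imp_interpolation:
  assumes "roc_curve f"
  obtains ps where "roc_interpolation ps f"
proof -
  from assms obtain ps :: "(real \<times> real) list" where len: "length ps \<ge> 2"
    and sorted: "sorted_wrt (\<lambda>p q. fst p < fst q) ps"
    and "hd ps = (0, 0)" "last ps = (1, 1)"
    and "\<forall>p \<in> set ps. p \<in> {0..1} \<times> {0..1}"
    and "\<forall>i < length ps - 1. \<forall>x \<in> {fst (ps ! i) .. fst (ps ! Suc i)}.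
          f x = snd (ps ! i) + (x - fst (ps ! i)) * (snd (ps ! Suc i) - snd (ps ! i))
                                / (fst (ps ! Suc i) - fst (ps ! i))"
    unfolding roc_curve_def by blast
  moreover have "ps \<noteq> []" using len by auto
  ultimately have "roc_interpolation ps f"
    using sorted_wrt_nth_less[OF sorted]
    by (intro roc_interpolation.intro) (auto simp: hd_conv_nth last_conv_nth)
  then show ?thesis by (rule that)
qed

lemma roc_curve_endpoints:
  assumes "roc_curve f"
  shows "f 0 = 0" "f 1 = 1"
  by (rule roc_curve_imp_interpolation[OF assms], erule roc_interpolation.endpoints)+

lemma roc_curve_le_one: "roc_curve f \<Longrightarrow> x \<in> {0..1} \<Longrightarrow> f x \<le> 1"
  by (erule roc_curve_imp_interpolation, erule roc_interpolation.le_one)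

lemma roc_curve_continuous_on: "roc_curve f \<Longrightarrow> continuous_on {0..1} f"
  by (erule roc_curve_imp_interpolation, erule roc_interpolation.continuous_on_unit_interval)

definition lesser_region :: "real \<Rightarrow> real \<Rightarrow> (real \<times> real) set" where
  "lesser_region t c = {p \<in> {0..1} \<times> {0..1}. cost (fst p) (snd p) t > c}"

lemma area_lesser_eq_measure: "area_lesser t h k = measure lborel (lesser_region t (cost h k t))"
  unfolding area_lesser_def lesser_region_def ..

lemma lesser_region_sets: "lesser_region t c \<in> sets lborel"
proof -
  have "open {p :: real \<times> real. c < cost (fst p) (snd p) t}"
    unfolding cost_def by (intro open_Collect_less continuous_intros)
  moreover have "lesser_region t c = ({0..1} \<times> {0..1}) \<inter> {p. c < cost (fst p) (snd p) t}"
    by (auto simp: lesser_region_def)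
  ultimately show ?thesis
    unfolding sets_lborel by (auto intro: borel_open borel_closed closed_Times)
qed

lemma measure_lesser_region_antimono:
  assumes "c \<le> c'"
  shows "measure lborel (lesser_region t c') \<le> measure lborel (lesser_region t c)"
proof (rule measure_mono_fmeasurable)
  show "lesser_region t c' \<subseteq> lesser_region t c"
    using assms by (auto simp: lesser_region_def)
  have "{0..1} \<times> {0..1} \<in> fmeasurable (lborel :: (real \<times> real) measure)"
    by (intro fmeasurable_compact compact_Times compact_Icc)
  moreover have "lesser_region t c \<subseteq> {0..1} \<times> {0..1}"
    by (auto simp: lesser_region_def)
  ultimately show "lesser_region t c \<in> fmeasurable lborel"
    using lesser_region_sets by (rule fmeasurableI2)
qed (rule lesser_region_sets)

lemma lesser_region_slice:
  assumes "t < 1"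
  shows "Pair x -` lesser_region t c =
    (if x \<in> {0..1} then {y \<in> {0..1}. y < 1 - (c - t * x) / (1 - t)} else {})"
  using assms by (auto simp: lesser_region_def cost_def field_simps)

lemma emeasure_lborel_unit_interval_below:
  assumes "0 \<le> u"
  shows "emeasure lborel {y \<in> {0..1::real}. y < u} = ennreal (min 1 u)"
proof (cases "u \<le> 1")
  case True
  then have "{y \<in> {0..1::real}. y < u} = {0..<u}" by auto
  then show ?thesis using True assms by simp
next
  case False
  then have "{y \<in> {0..1::real}. y < u} = {0..1}" by auto
  then show ?thesis using False by simp
qed

lemma has_integral_affine_real:
  fixes a b p q :: real
  assumes "a \<le> b"
  shows "((\<lambda>x. p + q * x) has_integral p * (b - a) + q * ((b\<^sup>2 - a\<^sup>2) / 2)) {a..b}"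
  using has_integral_add[OF has_integral_const_real[of p a b]
      has_integral_mult_right[OF ident_has_integral[OF assms], of q]] assms
  by (simp add: mult.commute)

lemma has_integral_lesser_slice_length:
  fixes t c :: real
  assumes "0 < t" "t < 1" "0 \<le> c" "c \<le> t"
  shows "((\<lambda>x. min 1 (1 - (c - t * x) / (1 - t))) has_integral 1 - c\<^sup>2 / (2 * t * (1 - t))) {0..1}"
proof -
  define g where "g x = min 1 (1 - (c - t * x) / (1 - t))" for x
  define d where "d = c / t"
  have d: "0 \<le> d" "d \<le> 1" using assms by (auto simp: d_def field_simps)
  have "(g has_integral (1 - c / (1 - t)) * d + t / (1 - t) * (d\<^sup>2 / 2)) {0..d}"
  proof (rule has_integral_eq[rotated])
    show "((\<lambda>x. (1 - c / (1 - t)) + t / (1 - t) * x) has_integral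
        (1 - c / (1 - t)) * d + t / (1 - t) * (d\<^sup>2 / 2)) {0..d}"
      using has_integral_affine_real[OF d(1), where p = "1 - c / (1 - t)" and q = "t / (1 - t)"]
      by simp
    fix x
    assume "x \<in> {0..d}"
    then have "t * x \<le> c" using assms by (auto simp: d_def field_simps)
    then have "g x = 1 - (c - t * x) / (1 - t)"
      using assms by (simp add: g_def)
    then show "1 - c / (1 - t) + t / (1 - t) * x = g x"
      by (simp add: diff_divide_distrib)
  qed
  moreover have "(g has_integral 1 - d) {d..1}"
  proof (rule has_integral_eq[rotated])
    show "((\<lambda>x. 1 :: real) has_integral 1 - d) {d..1}"
      using has_integral_const_real[of "1 :: real" d 1] d by simp
    fix x
    assume "x \<in> {d..1}"
    then have "c \<le> t * x" using assms by (auto simp: d_def field_simps)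
    then show "1 = g x"
      using assms by (simp add: g_def field_simps)
  qed
  ultimately have "(g has_integral (1 - c / (1 - t)) * d + t / (1 - t) * (d\<^sup>2 / 2) + (1 - d)) {0..1}"
    by (rule has_integral_combine[OF d])
  moreover have "c = t * d" using assms by (simp add: d_def)
  then have "(1 - c / (1 - t)) * d + t / (1 - t) * (d\<^sup>2 / 2) + (1 - d) = 1 - c\<^sup>2 / (2 * t * (1 - t))"
    using assms by (simp add: divide_simps power2_eq_square) (simp add: algebra_simps)
  ultimately have "(g has_integral 1 - c\<^sup>2 / (2 * t * (1 - t))) {0..1}" by metis
  then show ?thesis unfolding g_def[abs_def] .
qed

lemma measure_lesser_region:
  assumes "0 < t" "t < 1" "0 \<le> c" "c \<le> t" "c \<le> 1 - t"
  shows "measure lborel (lesser_region t c) = 1 - c\<^sup>2 / (2 * t * (1 - t))"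
proof -
  define u where "u x = 1 - (c - t * x) / (1 - t)" for x
  define s where "s x = min 1 (u x)" for x
  have u_nonneg: "0 \<le> u x" if "x \<in> {0..1}" for x
  proof -
    have "0 \<le> t * x" using that assms by simp
    then have "c - t * x \<le> 1 - t" using assms by linarith
    then show ?thesis using assms by (simp add: u_def field_simps)
  qed
  then have s_nonneg: "0 \<le> s x" if "x \<in> {0..1}" for x
    using that by (simp add: s_def)
  have I: "(s has_integral 1 - c\<^sup>2 / (2 * t * (1 - t))) {0..1}"
    unfolding s_def u_def using assms by (intro has_integral_lesser_slice_length)
  have "emeasure lborel (lesser_region t c) = emeasure (lborel \<Otimes>\<^sub>M lborel) (lesser_region t c)"
    by (simp add: lborel_prod)
  also have "\<dots> = (\<integral>\<^sup>+x. emeasure lborel (Pair x -` lesser_region t c) \<partial>lborel)"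
    using lesser_region_sets by (intro lborel.emeasure_pair_measure_alt) (simp only: lborel_prod)
  also have "\<dots> = (\<integral>\<^sup>+x. ennreal (s x) * indicator {0..1} x \<partial>lborel)"
  proof (rule nn_integral_cong)
    fix x :: real
    show "emeasure lborel (Pair x -` lesser_region t c) = ennreal (s x) * indicator {0..1} x"
    proof (cases "x \<in> {0..1}")
      case True
      then show ?thesis
        using emeasure_lborel_unit_interval_below[OF u_nonneg[OF True]] assms(2)
        by (simp only: lesser_region_slice if_True indicator_simps s_def u_def mult_1_right)
    qed (auto simp: lesser_region_slice assms(2))
  qed
  also have "\<dots> = ennreal (1 - c\<^sup>2 / (2 * t * (1 - t)))"
    by (rule nn_integral_has_integral_lebesgue'[OF s_nonneg I])
  finally show ?thesis
    using has_integral_nonneg[OF I s_nonneg] by (intro measure_eq_emeasure_eq_ennreal)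
qed

lemma convex_hull_attains_inner_min:
  fixes S :: "'a::euclidean_space set"
  assumes "compact S" "S \<noteq> {}"
  obtains s where "s \<in> S" "\<And>p. p \<in> convex hull S \<Longrightarrow> inner a s \<le> inner a p"
proof -
  have "continuous_on S (inner a)"
    by (rule continuous_on_inner[OF continuous_on_const continuous_on_id])
  then obtain s where "s \<in> S" and min: "\<And>p. p \<in> S \<Longrightarrow> inner a s \<le> inner a p"
    using continuous_attains_inf[OF assms] by blast
  moreover have "convex hull S \<subseteq> {p. inner a s \<le> inner a p}"
    using min by (intro hull_minimal) (auto simp: convex_halfspace_ge)
  ultimately show ?thesis using that by blast
qed

lemma cost_eq_inner: "cost x y t = inner (t, t - 1) (x, y) + (1 - t)"
  by (simp add: cost_def algebra_simps)

lemma graph_in_roc_hull: "x \<in> {0..1} \<Longrightarrow> (x, f x) \<in> roc_hull f"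
  unfolding roc_hull_def by (rule hull_inc) auto

lemma roc_hull_eq:
  assumes "roc_curve f"
  shows "roc_hull f = convex hull (insert (1, 0) ((\<lambda>x. (x, f x)) ` {0..1}))"
proof -
  have "{(x, f x) | x. x \<in> {0..1}} \<union> {(0, 0), (1, 1), (1, 0)} =
      insert (1, 0) ((\<lambda>x. (x, f x)) ` {0..1})"
    using roc_curve_endpoints[OF assms] by force
  then show ?thesis unfolding roc_hull_def by simp
qed

lemma optimal_point_in_roc_hull:
  assumes "roc_curve f" "optimal_point f t h k"
  shows "(h, k) \<in> roc_hull f"
proof -
  have "compact ((\<lambda>x. (x, f x)) ` {0..1})"
    using roc_curve_continuous_on[OF assms(1)]
    by (intro compact_continuous_image continuous_intros) auto
  then have "closed (roc_hull f)"
    unfolding roc_hull_eq[OF assms(1)] by (intro compact_imp_closed compact_convex_hull) auto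
  then show ?thesis
    using assms(2) frontier_subset_closed unfolding optimal_point_def by blast
qed

lemma optimal_cost_attained:
  assumes "roc_curve f" "t < 1" "optimal_point f t h k"
  obtains x where "x \<in> {0..1}" "cost x (f x) t = cost h k t"
proof -
  define S where "S = insert (1, 0) ((\<lambda>x. (x, f x)) ` {0..1::real})"
  have "compact S"
    unfolding S_def using roc_curve_continuous_on[OF assms(1)]
    by (intro compact_insert compact_continuous_image continuous_intros) auto
  then obtain s where "s \<in> S" and s_min: "\<And>p. p \<in> roc_hull f \<Longrightarrow> inner (t, t - 1) s \<le> inner (t, t - 1) p"
    using convex_hull_attains_inner_min[of S "(t, t - 1)"] roc_hull_eq[OF assms(1)]
    unfolding S_def by auto
  have opt: "cost h k t \<le> cost x y t" if "(x, y) \<in> roc_hull f" for x y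
    using assms(3) that unfolding optimal_point_def by blast
  have "s \<in> roc_hull f" using \<open>s \<in> S\<close> roc_hull_eq[OF assms(1)] unfolding S_def by (auto intro: hull_inc)
  then have s_cost: "cost (fst s) (snd s) t = cost h k t"
    using s_min[OF optimal_point_in_roc_hull[OF assms(1,3)]] opt[of "fst s" "snd s"]
    by (simp add: cost_eq_inner)
  \<comment> \<open>the corner (1,0) has cost 1, more than the cost t of (1,1)\<close>
  have "cost h k t \<le> t"
    using opt[of 1 1] graph_in_roc_hull[of 1 f] roc_curve_endpoints[OF assms(1)]
    by (simp add: cost_def)
  then have "s \<noteq> (1, 0)" using s_cost assms(2) by (auto simp: cost_def)
  then obtain x where "x \<in> {0..1}" "s = (x, f x)" using \<open>s \<in> S\<close> unfolding S_def by auto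
  then show ?thesis using s_cost that by auto
qed

lemma SUP_area_lesser_optimal:
  assumes roc: "roc_curve f" and t: "0 < t" "t < 1" and opt: "optimal_point f t h k"
  shows "(SUP x\<in>{0..1}. area_lesser t x (f x)) = 1 - (cost h k t)\<^sup>2 / (2 * t * (1 - t))"
proof -
  define c where "c = cost h k t"
  have c_le: "c \<le> cost x (f x) t" if "x \<in> {0..1}" for x
    using opt graph_in_roc_hull[OF that] unfolding optimal_point_def c_def by blast
  obtain x0 where x0: "x0 \<in> {0..1}" "cost x0 (f x0) t = c"
    using optimal_cost_attained[OF roc t(2) opt] unfolding c_def by blast
  have "0 \<le> c"
    using x0 roc_curve_le_one[OF roc x0(1)] t by (auto simp: cost_def)
  moreover have "c \<le> t" "c \<le> 1 - t"
    using c_le[of 1] c_le[of 0] roc_curve_endpoints[OF roc] by (auto simp: cost_def)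
  ultimately have area: "measure lborel (lesser_region t c) = 1 - c\<^sup>2 / (2 * t * (1 - t))"
    using t by (intro measure_lesser_region)
  show ?thesis unfolding c_def[symmetric]
  proof (rule cSup_eq_maximum)
    show "1 - c\<^sup>2 / (2 * t * (1 - t)) \<in> (\<lambda>x. area_lesser t x (f x)) ` {0..1}"
      using x0 area by (force simp: area_lesser_eq_measure)
  next
    fix z
    assume "z \<in> (\<lambda>x. area_lesser t x (f x)) ` {0..1}"
    then obtain x where "x \<in> {0..1}" "z = area_lesser t x (f x)" by blast
    then show "z \<le> 1 - c\<^sup>2 / (2 * t * (1 - t))"
      unfolding area_lesser_eq_measure area[symmetric]
      using c_le by (simp add: measure_lesser_region_antimono)
  qed
qed

theorem theorem24:
  fixes f :: "real \<Rightarrow> real" and a b h k :: real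
  assumes "roc_curve f"
    and "0 \<le> a" and "a < b" and "b \<le> 1"
    and "\<forall>t \<in> {a..b}. optimal_point f t h k"
  shows "VOROS f a b =
           1 / (b - a) * (LINT t:{a..b}|lborel. 1 - (cost h k t)\<^sup>2 / (2 * t * (1 - t)))"
proof -
  have "(SUP x\<in>{0..1}. area_lesser t x (f x)) = 1 - (cost h k t)\<^sup>2 / (2 * t * (1 - t))"
    if "t \<in> {a<..<b}" for t
    using that assms by (intro SUP_area_lesser_optimal) auto
  \<comment> \<open>the endpoints, where 2t(1 - t) may vanish, form a null set; no measurability is needed\<close>
  then have "(LINT t:{a..b}|lborel. (SUP x\<in>{0..1}. area_lesser t x (f x))) =
      (LINT t:{a..b}|lborel. 1 - (cost h k t)\<^sup>2 / (2 * t * (1 - t)))"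
    unfolding set_lebesgue_integral_def
    by (intro integral_discrete_difference[of "{a, b}"]) (auto simp: indicator_def)
  then show ?thesis unfolding VOROS_def by simp
qed

end
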